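(* Consider the multi-scenario problem and the consensus-ADMM iteration described in the context, and let $\dot{z}$ be the optimal value of the original (non-decomposed) problem. For each iteration $\nu\ge 0$ and each scenario pair $(\gamma,k)$ define $$D^{\nu}_{\gamma k}=\max_{x\in\mathcal{Q}_{\gamma k}}\sum_{t\in\mathcal{T}}\Big(c_{t\gamma k}^{\top}x_t-(\mu^{\nu}_{t\gamma k})^{\top}X_t\Big),$$ where $X_t$ is the investment sub-vector of $x_t$. Then at every iteration $\nu$, $$\text{GUB}^{\nu}:=\sum_{\gamma\in\mathcal{G}}\sum_{k\in\mathcal{K}}\pi^{\text{LT}}_\gamma\pi^{\text{MS}}_k\,D^{\nu}_{\gamma k}\;\ge\;\dot{z}.$$
   Context: Setting. $\mathcal{T}$ is a finite set of time stages; $\mathcal{G}$ is a finite set of long-term scenarios with probabilities $\pi^{\text{LT}}_\gamma>0$, $\sum_{\gamma}\pi^{\text{LT}}_\gamma=1$; $\mathcal{K}$ is a finite set of short-term (market) scenarios with probabilities $\pi^{\text{MS}}_k>0$, $\sum_k\pi^{\text{MS}}_k=1$. For each stage $t$, $\mathcal{P}_t$ is a partition of $\mathcal{G}$ into nodes of the long-term scenario tree at stage $t$. For each scenario pair $(\gamma,k)$ there is a decision vector $x_{\gamma k}=(x_{t\gamma k})_{t\in\mathcal{T}}$ constrained to a (possibly non-convex, e.g. mixed-integer) feasible set $\mathcal{Q}_{\gamma k}$, and cost vectors $c_{t\gamma k}$; each $x_{t\gamma k}$ contains a sub-vector of investment decisions $X_{t\gamma k}$. The maxima defining $D^\nu_{\gamma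 k}$ are assumed to be attained. The original problem is: maximize $\sum_{\gamma}\sum_{k}\pi^{\text{LT}}_\gamma\pi^{\text{MS}}_k\sum_{t}c_{t\gamma k}^{\top}x_{t\gamma k}$ subject to $x_{\gamma k}\in\mathcal{Q}_{\gamma k}$ for all $(\gamma,k)$ and the non-anticipativity conditions $X_{t\gamma k}=X_{t\gamma' k'}$ for all $t$, all $k,k'\in\mathcal{K}$ and all $\gamma,\gamma'$ in the same node of $\mathcal{P}_t$; $\dot z$ is its optimal value (attained). (In the paper this is the single-level MILP reformulation of a bilevel multi-stage strategic generation investment problem.) Consensus-ADMM iteration with penalty $\rho>0$, dual variables initialized by $\mu^{-1}_{t\gamma k}=0$ and some initial $X^{-1}_{t\gamma k}$: at iteration $\nu=0,1,2,\dots$: (i) for each $(\gamma,k)$, $X^{\nu}_{\cdot\gamma k}$ is the investment part of a maximizer over $x\in\mathcal{Q}_{\gamma k}$ of $\sum_{t}\big(c_{t\gamma k}^{\top}x_t-(\mu^{\nu-1}_{t\gamma k})^{\top}X_t-\tfrac{\rho}{2}\|X_t-X^{\nu-1}_{t\gamma k}\|_2^2\big)$; (ii) for each $t$ and $(\gamma,k)$ with $\gamma$ in node $N\in\mathcal{P}_t$, $\overline{X}^{\nu}_{t\gamma k}=\dfrac{\sum_{\gamma'\in N,k'\in\mathcal{K}}\pi^{\text{LT}}_{\gamma'}\pi^{\text{MS}}_{k'}X^{\nu}_{t\gamma'k'}}{\sum_{\gamma'\in N,k'\in\mathcal{K}}\pi^{\text{LT}}_{\gamma'}\pi^{\text{MS}}_{k'}}$;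 (iii) $\mu^{\nu}_{t\gamma k}=\mu^{\nu-1}_{t\gamma k}+\rho\,(X^{\nu}_{t\gamma k}-\overline{X}^{\nu}_{t\gamma k})$. *)

theory Defs
  imports "HOL-Analysis.Analysis" "HOL-Library.Disjoint_Sets"
begin

text \<open>The investment sub-vector X_t
  consists of the components in the index set J.\<close>

definition lin_obj :: "'t set \<Rightarrow> ('t \<Rightarrow> 'i::finite \<Rightarrow> real) \<Rightarrow> ('t \<Rightarrow> 'i \<Rightarrow> real) \<Rightarrow> real" where
  "lin_obj T c x = (\<Sum>t\<in>T. \<Sum>i\<in>UNIV. c t i * x t i)"

definition lagr :: "'t set \<Rightarrow> 'i set \<Rightarrow> ('t \<Rightarrow> 'i::finite \<Rightarrow> real) \<Rightarrow> ('t \<Rightarrow> 'i \<Rightarrow> real)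
    \<Rightarrow> ('t \<Rightarrow> 'i \<Rightarrow> real) \<Rightarrow> real" where
  "lagr T J c mu x = (\<Sum>t\<in>T. (\<Sum>i\<in>UNIV. c t i * x t i) - (\<Sum>j\<in>J. mu t j * x t j))"

definition aug_lagr :: "'t set \<Rightarrow> 'i set \<Rightarrow> real \<Rightarrow> ('t \<Rightarrow> 'i::finite \<Rightarrow> real) \<Rightarrow> ('t \<Rightarrow> 'i \<Rightarrow> real)
    \<Rightarrow> ('t \<Rightarrow> 'i \<Rightarrow> real) \<Rightarrow> ('t \<Rightarrow> 'i \<Rightarrow> real) \<Rightarrow> real" where
  "aug_lagr T J \<rho> c mu Xprev x =
     (\<Sum>t\<in>T. (\<Sum>i\<in>UNIV. c t i * x t i) - (\<Sum>j\<in>J. mu t j * x t j)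
             - \<rho> / 2 * (\<Sum>j\<in>J. (x t j - Xprev t j)\<^sup>2))"

definition nonanticipative :: "'t set \<Rightarrow> ('t \<Rightarrow> 'g set set) \<Rightarrow> 'k set \<Rightarrow> 'i set
    \<Rightarrow> ('g \<Rightarrow> 'k \<Rightarrow> 't \<Rightarrow> 'i \<Rightarrow> real) \<Rightarrow> bool" where
  "nonanticipative T P K J x \<longleftrightarrow>
     (\<forall>t\<in>T. \<forall>N\<in>P t. \<forall>\<gamma>\<in>N. \<forall>\<gamma>'\<in>N. \<forall>k\<in>K. \<forall>k'\<in>K. \<forall>j\<in>J. x \<gamma> k t j = x \<gamma>' k' t j)"

definition total_obj :: "'g set \<Rightarrow> 'k set \<Rightarrow> 't set \<Rightarrow> ('g \<Rightarrow> real) \<Rightarrow> ('k \<Rightarrow> real)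
    \<Rightarrow> ('g \<Rightarrow> 'k \<Rightarrow> 't \<Rightarrow> 'i::finite \<Rightarrow> real) \<Rightarrow> ('g \<Rightarrow> 'k \<Rightarrow> 't \<Rightarrow> 'i \<Rightarrow> real) \<Rightarrow> real" where
  "total_obj G K T \<pi>LT \<pi>MS c x = (\<Sum>\<gamma>\<in>G. \<Sum>k\<in>K. \<pi>LT \<gamma> * \<pi>MS k * lin_obj T (c \<gamma> k) (x \<gamma> k))"

end

theory Submission
  imports Defs
begin

text \<open>Each dual update adds \<rho> times a deviation from a probability-weighted node mean, so the
  multipliers \<mu> keep weighted sum zero over every node of the scenario tree at every iteration.
  For a non-anticipative x the investments are constant on each node, hence the pricing term
  \<Sum> \<pi>LT \<pi>MS \<mu> X vanishes and the weighted Lagrangian of an optimal solution equals zdot.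
  Bounding each scenario's Lagrangian by its maximum D gives the claim.\<close>

lemma sum_weighted_deviation_from_mean:
  fixes w f :: "'a \<Rightarrow> real"
  assumes "finite A" and "\<forall>a\<in>A. 0 < w a"
  shows "(\<Sum>a\<in>A. w a * (f a - (\<Sum>b\<in>A. w b * f b) / (\<Sum>b\<in>A. w b))) = 0"
proof (cases "A = {}")
  case False
  define S W where "S = (\<Sum>b\<in>A. w b * f b)" and "W = (\<Sum>b\<in>A. w b)"
  have "W \<noteq> 0"
    unfolding W_def using sum_pos[OF assms(1) False] assms(2) by force
  have "(\<Sum>a\<in>A. w a * (f a - S / W)) = S - (\<Sum>a\<in>A. w a) * (S / W)"
    unfolding S_def right_diff_distrib sum_subtractf sum_distrib_right ..
  also have "\<dots> = 0"
    using \<open>W \<noteq> 0\<close> unfolding W_def by simp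
  finally show ?thesis
    unfolding S_def W_def .
qed simp

lemma weighted_sum_of_dual_iterates_eq_0:
  fixes w :: "'a \<Rightarrow> real" and \<mu> X :: "nat \<Rightarrow> 'a \<Rightarrow> real"
  assumes "finite A" and "\<forall>a\<in>A. 0 < w a"
    and update: "\<And>n a. a \<in> A \<Longrightarrow> \<mu> n a = (if n = 0 then 0 else \<mu> (n - 1) a)
                   + \<rho> * (X n a - (\<Sum>b\<in>A. w b * X n b) / (\<Sum>b\<in>A. w b))"
  shows "(\<Sum>a\<in>A. w a * \<mu> n a) = 0"
proof -
  let ?dev = "\<lambda>n a. X n a - (\<Sum>b\<in>A. w b * X n b) / (\<Sum>b\<in>A. w b)"
  have "(\<Sum>a\<in>A. w a * \<mu> n a)
      = (\<Sum>a\<in>A. w a * (if n = 0 then 0 else \<mu> (n - 1) a)) + \<rho> * (\<Sum>a\<in>A. w a * ?dev n a)" for n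
    by (simp add: update distrib_left sum.distrib sum_distrib_left mult.left_commute)
  then have step: "(\<Sum>a\<in>A. w a * \<mu> n a) = (\<Sum>a\<in>A. w a * (if n = 0 then 0 else \<mu> (n - 1) a))" for n
    using sum_weighted_deviation_from_mean[OF assms(1,2)] by simp
  show ?thesis
    by (induction n) (use step in auto)
qed

lemma node_weighted_sum_of_multipliers_eq_0:
  fixes w :: "'g \<Rightarrow> 'k \<Rightarrow> real" and \<mu> X Xbar :: "nat \<Rightarrow> 'g \<Rightarrow> 'k \<Rightarrow> real"
  assumes "finite N" and "finite K" and pos: "\<forall>\<gamma>\<in>N. \<forall>k\<in>K. 0 < w \<gamma> k"
    and mean: "\<And>n \<gamma> k. \<gamma> \<in> N \<Longrightarrow> k \<in> K \<Longrightarrow>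
      Xbar n \<gamma> k = (\<Sum>\<gamma>'\<in>N. \<Sum>k'\<in>K. w \<gamma>' k' * X n \<gamma>' k') / (\<Sum>\<gamma>'\<in>N. \<Sum>k'\<in>K. w \<gamma>' k')"
    and update: "\<And>n \<gamma> k. \<gamma> \<in> N \<Longrightarrow> k \<in> K \<Longrightarrow>
      \<mu> n \<gamma> k = (if n = 0 then 0 else \<mu> (n - 1) \<gamma> k) + \<rho> * (X n \<gamma> k - Xbar n \<gamma> k)"
  shows "(\<Sum>\<gamma>\<in>N. \<Sum>k\<in>K. w \<gamma> k * \<mu> n \<gamma> k) = 0"
proof -
  have pairs: "(\<Sum>a\<in>N \<times> K. h a) = (\<Sum>\<gamma>\<in>N. \<Sum>k\<in>K. h (\<gamma>, k))" for h :: "'g \<times> 'k \<Rightarrow> real"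
    by (simp add: sum.cartesian_product)
  have "(\<Sum>a\<in>N \<times> K. case_prod w a * case_prod (\<mu> n) a) = 0"
  proof (rule weighted_sum_of_dual_iterates_eq_0[where X = "\<lambda>n. case_prod (X n)"])
    show "finite (N \<times> K)"
      using assms(1,2) by simp
    show "\<forall>a\<in>N \<times> K. 0 < case_prod w a"
      using pos by auto
    show "case_prod (\<mu> n) a = (if n = 0 then 0 else case_prod (\<mu> (n - 1)) a)
        + \<rho> * (case_prod (X n) a - (\<Sum>b\<in>N \<times> K. case_prod w b * case_prod (X n) b)
                                   / (\<Sum>b\<in>N \<times> K. case_prod w b))"
      if a: "a \<in> N \<times> K" for n a
    proof -
      obtain \<gamma> k where "a = (\<gamma>, k)" "\<gamma> \<in> N" "k \<in> K"
        using a by blast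
      then show ?thesis
        using update[of \<gamma> k n] mean[of \<gamma> k n] by (simp add: pairs)
    qed
  qed
  then show ?thesis
    by (simp add: pairs)
qed

lemma sum_mult_blockwise_constant_eq_0:
  fixes f g :: "'a \<Rightarrow> real"
  assumes "finite A" and "partition_on A P"
    and block_sum: "\<forall>B\<in>P. (\<Sum>a\<in>B. f a) = 0" and block_const: "\<forall>B\<in>P. \<forall>a\<in>B. \<forall>b\<in>B. g a = g b"
  shows "(\<Sum>a\<in>A. f a * g a) = 0"
proof -
  have "(\<Sum>a\<in>B. f a * g a) = 0" if B: "B \<in> P" for B
  proof -
    have "B \<noteq> {}"
      using B partition_onD3[OF assms(2)] by auto
    then obtain b where "b \<in> B"
      by blast
    have "(\<Sum>a\<in>B. f a * g a) = (\<Sum>a\<in>B. f a * g b)"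
    proof (rule sum.cong[OF refl])
      fix a assume "a \<in> B"
      then have "g a = g b"
        using block_const B \<open>b \<in> B\<close> by blast
      then show "f a * g a = f a * g b" by simp
    qed
    also have "\<dots> = (\<Sum>a\<in>B. f a) * g b"
      by (rule sum_distrib_right[symmetric])
    finally have "(\<Sum>a\<in>B. f a * g a) = (\<Sum>a\<in>B. f a) * g b" .
    then show ?thesis
      using block_sum B by simp
  qed
  then show ?thesis
    by (simp add: sum.partition[OF assms(1,2)])
qed

lemma sum_mult_nonanticipative_eq_0:
  fixes m y :: "'g \<Rightarrow> 'k \<Rightarrow> real"
  assumes "finite G" and "partition_on G P" and "k0 \<in> K"
    and node_sum: "\<forall>N\<in>P. (\<Sum>\<gamma>\<in>N. \<Sum>k\<in>K. m \<gamma> k) = 0"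
    and const: "\<forall>N\<in>P. \<forall>\<gamma>\<in>N. \<forall>\<gamma>'\<in>N. \<forall>k\<in>K. \<forall>k'\<in>K. y \<gamma> k = y \<gamma>' k'"
  shows "(\<Sum>\<gamma>\<in>G. \<Sum>k\<in>K. m \<gamma> k * y \<gamma> k) = 0"
proof -
  have "y \<gamma> k = y \<gamma> k0" if "\<gamma> \<in> G" "k \<in> K" for \<gamma> k
    using const partition_onD1[OF assms(2)] that \<open>k0 \<in> K\<close> by blast
  then have "(\<Sum>\<gamma>\<in>G. \<Sum>k\<in>K. m \<gamma> k * y \<gamma> k) = (\<Sum>\<gamma>\<in>G. (\<Sum>k\<in>K. m \<gamma> k) * y \<gamma> k0)"
    by (simp add: sum_distrib_right)
  also have "\<dots> = 0"
    using const \<open>k0 \<in> K\<close>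
    by (intro sum_mult_blockwise_constant_eq_0[OF assms(1,2) node_sum]) blast
  finally show ?thesis .
qed

lemma lagr_eq_lin_obj_minus_pricing:
  "lagr T J c \<mu> x = lin_obj T c x - (\<Sum>t\<in>T. \<Sum>j\<in>J. \<mu> t j * x t j)"
  by (simp add: lagr_def lin_obj_def sum_subtractf)

lemma weighted_lagr_eq_total_obj_minus_pricing:
  "(\<Sum>\<gamma>\<in>G. \<Sum>k\<in>K. \<pi>LT \<gamma> * \<pi>MS k * lagr T J (c \<gamma> k) (\<mu> \<gamma> k) (x \<gamma> k))
     = total_obj G K T \<pi>LT \<pi>MS c x
       - (\<Sum>t\<in>T. \<Sum>j\<in>J. \<Sum>\<gamma>\<in>G. \<Sum>k\<in>K. \<pi>LT \<gamma> * \<pi>MS k * \<mu> \<gamma> k t j * x \<gamma> k t j)"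
proof -
  have "(\<Sum>\<gamma>\<in>G. \<Sum>k\<in>K. \<pi>LT \<gamma> * \<pi>MS k * lagr T J (c \<gamma> k) (\<mu> \<gamma> k) (x \<gamma> k))
      = total_obj G K T \<pi>LT \<pi>MS c x
        - (\<Sum>\<gamma>\<in>G. \<Sum>k\<in>K. \<Sum>t\<in>T. \<Sum>j\<in>J. \<pi>LT \<gamma> * \<pi>MS k * \<mu> \<gamma> k t j * x \<gamma> k t j)"
    by (simp add: lagr_eq_lin_obj_minus_pricing total_obj_def right_diff_distrib sum_subtractf
        sum_distrib_left mult.assoc)
  also have "(\<Sum>\<gamma>\<in>G. \<Sum>k\<in>K. \<Sum>t\<in>T. \<Sum>j\<in>J. \<pi>LT \<gamma> * \<pi>MS k * \<mu> \<gamma> k t j * x \<gamma> k t j)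
      = (\<Sum>t\<in>T. \<Sum>j\<in>J. \<Sum>\<gamma>\<in>G. \<Sum>k\<in>K. \<pi>LT \<gamma> * \<pi>MS k * \<mu> \<gamma> k t j * x \<gamma> k t j)"
  proof -
    let ?f = "\<lambda>\<gamma> k t j. \<pi>LT \<gamma> * \<pi>MS k * \<mu> \<gamma> k t j * x \<gamma> k t j"
    have inner: "(\<Sum>k\<in>K. \<Sum>t\<in>T. \<Sum>j\<in>J. ?f \<gamma> k t j) = (\<Sum>t\<in>T. \<Sum>j\<in>J. \<Sum>k\<in>K. ?f \<gamma> k t j)"
      for \<gamma>
      using sum.swap[of "\<lambda>k j. ?f \<gamma> k _ j" J K] by (subst sum.swap) simp
    have "(\<Sum>\<gamma>\<in>G. \<Sum>t\<in>T. \<Sum>j\<in>J. \<Sum>k\<in>K. ?f \<gamma> k t j)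
        = (\<Sum>t\<in>T. \<Sum>j\<in>J. \<Sum>\<gamma>\<in>G. \<Sum>k\<in>K. ?f \<gamma> k t j)"
      using sum.swap[of "\<lambda>\<gamma> j. \<Sum>k\<in>K. ?f \<gamma> k _ j" J G] by (subst sum.swap) simp
    then show ?thesis
      by (simp only: inner)
  qed
  finally show ?thesis .
qed

lemma cSUP_upper_attained:
  fixes f :: "'a \<Rightarrow> real"
  assumes "x \<in> Q" and "\<exists>z\<in>Q. \<forall>y\<in>Q. f y \<le> f z"
  shows "f x \<le> (SUP y\<in>Q. f y)"
proof (rule cSUP_upper[OF assms(1)])
  show "bdd_above (f ` Q)"
    using assms(2) by (auto simp: bdd_above_def)
qed

theorem theorem1:
  fixes G :: "'g set" and K :: "'k set" and T :: "'t set" and J :: "'i::finite set"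
    and \<pi>LT :: "'g \<Rightarrow> real" and \<pi>MS :: "'k \<Rightarrow> real"
    and P :: "'t \<Rightarrow> 'g set set"
    and Q :: "'g \<Rightarrow> 'k \<Rightarrow> ('t \<Rightarrow> 'i \<Rightarrow> real) set"
    and c :: "'g \<Rightarrow> 'k \<Rightarrow> 't \<Rightarrow> 'i \<Rightarrow> real"
    and zdot :: real and \<rho> :: real
    and Xinit :: "'g \<Rightarrow> 'k \<Rightarrow> 't \<Rightarrow> 'i \<Rightarrow> real"
    and X Xbar \<mu> :: "nat \<Rightarrow> 'g \<Rightarrow> 'k \<Rightarrow> 't \<Rightarrow> 'i \<Rightarrow> real"
    and \<nu> :: nat
  assumes finG: "finite G" and finK: "finite K" and finT: "finite T"
    and piLT_pos: "\<forall>\<gamma>\<in>G. \<pi>LT \<gamma> > 0" and piLT_sum: "(\<Sum>\<gamma>\<in>G. \<pi>LT \<gamma>) = 1"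
    and piMS_pos: "\<forall>k\<in>K. \<pi>MS k > 0" and piMS_sum: "(\<Sum>k\<in>K. \<pi>MS k) = 1"
    and partition: "\<forall>t\<in>T. partition_on G (P t)"
    \<comment> \<open>zdot is the optimal value of the original problem, attained\<close>
    and zdot_attained: "\<exists>x. (\<forall>\<gamma>\<in>G. \<forall>k\<in>K. x \<gamma> k \<in> Q \<gamma> k) \<and> nonanticipative T P K J x
                           \<and> total_obj G K T \<pi>LT \<pi>MS c x = zdot"
    and zdot_opt: "\<forall>x. (\<forall>\<gamma>\<in>G. \<forall>k\<in>K. x \<gamma> k \<in> Q \<gamma> k) \<and> nonanticipative T P K J x
                           \<longrightarrow> total_obj G K T \<pi>LT \<pi>MS c x \<le> zdot"
    and rho_pos: "\<rho> > 0"
    \<comment> \<open>ADMM step (i); \<mu>^{-1} = 0 and X^{-1} = Xinit\<close>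
    and step_i: "\<forall>n. \<forall>\<gamma>\<in>G. \<forall>k\<in>K. \<exists>x\<in>Q \<gamma> k.
        (\<forall>y\<in>Q \<gamma> k.
           aug_lagr T J \<rho> (c \<gamma> k) (if n = 0 then (\<lambda>_ _. 0) else \<mu> (n - 1) \<gamma> k)
                    (if n = 0 then Xinit \<gamma> k else X (n - 1) \<gamma> k) y
         \<le> aug_lagr T J \<rho> (c \<gamma> k) (if n = 0 then (\<lambda>_ _. 0) else \<mu> (n - 1) \<gamma> k)
                    (if n = 0 then Xinit \<gamma> k else X (n - 1) \<gamma> k) x)
        \<and> (\<forall>t\<in>T. \<forall>j\<in>J. X n \<gamma> k t j = x t j)"
    \<comment> \<open>ADMM step (ii)\<close>
    and step_ii: "\<forall>n. \<forall>t\<in>T. \<forall>N\<in>P t. \<forall>\<gamma>\<in>N. \<forall>k\<in>K. \<forall>j\<in>J.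
        Xbar n \<gamma> k t j =
          (\<Sum>\<gamma>'\<in>N. \<Sum>k'\<in>K. \<pi>LT \<gamma>' * \<pi>MS k' * X n \<gamma>' k' t j)
          / (\<Sum>\<gamma>'\<in>N. \<Sum>k'\<in>K. \<pi>LT \<gamma>' * \<pi>MS k')"
    \<comment> \<open>ADMM step (iii)\<close>
    and step_iii: "\<forall>n. \<forall>\<gamma>\<in>G. \<forall>k\<in>K. \<forall>t\<in>T. \<forall>j\<in>J.
        \<mu> n \<gamma> k t j = (if n = 0 then 0 else \<mu> (n - 1) \<gamma> k t j) + \<rho> * (X n \<gamma> k t j - Xbar n \<gamma> k t j)"
    \<comment> \<open>the maxima defining D^\<nu> are attained\<close>
    and D_attained: "\<forall>n. \<forall>\<gamma>\<in>G. \<forall>k\<in>K. \<exists>x\<in>Q \<gamma> k. \<forall>y\<in>Q \<gamma> k.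
        lagr T J (c \<gamma> k) (\<mu> n \<gamma> k) y \<le> lagr T J (c \<gamma> k) (\<mu> n \<gamma> k) x"
  shows "(\<Sum>\<gamma>\<in>G. \<Sum>k\<in>K. \<pi>LT \<gamma> * \<pi>MS k *
            (SUP x\<in>Q \<gamma> k. lagr T J (c \<gamma> k) (\<mu> \<nu> \<gamma> k) x)) \<ge> zdot"
proof -
  have "K \<noteq> {}"
    using piMS_sum by auto
  then obtain k0 where "k0 \<in> K"
    by blast
  obtain x where xQ: "\<forall>\<gamma>\<in>G. \<forall>k\<in>K. x \<gamma> k \<in> Q \<gamma> k" and "nonanticipative T P K J x"
    and "total_obj G K T \<pi>LT \<pi>MS c x = zdot"
    using zdot_attained by blast
  have node_sum: "(\<Sum>\<gamma>\<in>N. \<Sum>k\<in>K. \<pi>LT \<gamma> * \<pi>MS k * \<mu> \<nu> \<gamma> k t j) = 0"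
    if t: "t \<in> T" and N: "N \<in> P t" and j: "j \<in> J" for t N j
  proof -
    have "N \<subseteq> G"
      using partition t N by (auto simp: partition_on_def)
    then show ?thesis
      using finG finK piLT_pos piMS_pos step_ii step_iii t N j
      by (intro node_weighted_sum_of_multipliers_eq_0[where X = "\<lambda>n \<gamma> k. X n \<gamma> k t j"
          and Xbar = "\<lambda>n \<gamma> k. Xbar n \<gamma> k t j" and \<mu> = "\<lambda>n \<gamma> k. \<mu> n \<gamma> k t j" and \<rho> = \<rho>])
        (blast intro: mult_pos_pos finite_subset)+
  qed
  have pricing: "(\<Sum>\<gamma>\<in>G. \<Sum>k\<in>K. \<pi>LT \<gamma> * \<pi>MS k * \<mu> \<nu> \<gamma> k t j * x \<gamma> k t j) = 0"
    if t: "t \<in> T" and j: "j \<in> J" for t j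
    using partition \<open>k0 \<in> K\<close> node_sum \<open>nonanticipative T P K J x\<close> t j
    unfolding nonanticipative_def by (intro sum_mult_nonanticipative_eq_0[OF finG]) blast+
  have "(\<Sum>\<gamma>\<in>G. \<Sum>k\<in>K. \<pi>LT \<gamma> * \<pi>MS k * lagr T J (c \<gamma> k) (\<mu> \<nu> \<gamma> k) (x \<gamma> k)) = zdot"
    using \<open>total_obj G K T \<pi>LT \<pi>MS c x = zdot\<close> pricing
    by (simp add: weighted_lagr_eq_total_obj_minus_pricing)
  moreover have "(\<Sum>\<gamma>\<in>G. \<Sum>k\<in>K. \<pi>LT \<gamma> * \<pi>MS k * lagr T J (c \<gamma> k) (\<mu> \<nu> \<gamma> k) (x \<gamma> k))
      \<le> (\<Sum>\<gamma>\<in>G. \<Sum>k\<in>K. \<pi>LT \<gamma> * \<pi>MS k * (SUP y\<in>Q \<gamma> k. lagr T J (c \<gamma> k) (\<mu> \<nu> \<gamma> k) y))"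
    using xQ D_attained piLT_pos piMS_pos
    by (intro sum_mono mult_left_mono cSUP_upper_attained) (auto simp: less_imp_le)
  ultimately show ?thesis
    by simp
qed

end
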